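(* Let $n\ge2$. For $j=1,\dots,n-1$ let $M_j$ be the $2\times 2$ matrix of the $j$-th component of $x\in X^1$, and put $\delta_j=\det M_j$, $t_j=\tfrac12\operatorname{tr}(M_j^tM_j)$, define $a_j,b_j$ by $M_j^tM_j-t_jI=\begin{pmatrix}a_j&b_j\\ b_j&-a_j\end{pmatrix}$, and put $w_j^{+}=\tfrac12(a_j-ib_j)$, $w_j^-=\tfrac12(a_j+ib_j)$, $u_{1j}=4w_1^+w_j^-$, and $\tilde u_j=u_{1j}/(\delta_1^2-t_1^2)$ for $j=2,\dots,n-1$. Then the $3n-4$ functions $t_1,\dots,t_{n-1},\delta_1,\dots,\delta_{n-1},\tilde u_2,\dots,\tilde u_{n-1}$ are $W'$-invariant, algebraically independent, and generate $\mathbb C(X^1)^{W'}$; that is, $\operatorname{Spec}(\mathbb C[t_\bullet,\delta_\bullet,\tilde u_\bullet]_\Delta)$ with $\Delta=\prod_{i=1}^{n-1}\delta_i(\delta_i^2-t_i^2)$ is a rational quotient for the action of $W'$ on $X^1$. In particular $\mathbb C(X^1)^{W'}$ is purely transcendental over $\mathbb C$ of degree $3n-4$.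
   Context: Let $U_1,\dots,U_n$ be two-dimensional complex vector spaces (the transversal planes $\mathscr V_i^t$), each with a nondegenerate symmetric bilinear form and a chosen orthonormal basis, so $U_i\cong\mathbb C^2$ with the standard form and $\mathrm{SO}(U_i)\cong\mathrm{SO}_2(\mathbb C)$. Let $X^1=\bigoplus_{j=1}^{n-1}U_j\otimes U_n$, and identify each $U_j\otimes U_n$ with $M_2(\mathbb C)$ by sending $\sum_{a,b}c_{ab}f^{(j)}_a\otimes f^{(n)}_b$ to $(c_{ab})$, where $f^{(i)}_1,f^{(i)}_2$ is the orthonormal basis of $U_i$. The group $N'=\prod_{i=1}^n\mathrm{SO}(U_i)$ acts on $X^1$ by $g_j\otimes g_n$ on the $j$-th summand, i.e. $M_j\mapsto g_jM_jg_n^{-1}$; the element $(-I,\dots,-I)$ acts trivially, and $W'=N'/\{\pm(I,\dots,I)\}$. For a group acting on a variety, a rational quotient is a variety whose function field is isomorphic to the field of invariant rational functions. *)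

theory Defs
  imports "HOL-Analysis.Analysis"
begin

type_synonym mat2 = "complex^2^2"
type_synonym ptX = "nat \<Rightarrow> mat2"  (* component j (1 \<le> j \<le> n-1) is M_j; other components unused *)

text \<open>Polynomial functions generated by a set of coordinate functions
  (over the infinite field C, polynomial functions = polynomials).\<close>
inductive_set polyfun :: "('p \<Rightarrow> complex) set \<Rightarrow> ('p \<Rightarrow> complex) set"
  for C :: "('p \<Rightarrow> complex) set" where
  pf_const: "(\<lambda>x. c) \<in> polyfun C"
| pf_coord: "f \<in> C \<Longrightarrow> f \<in> polyfun C"
| pf_add: "f \<in> polyfun C \<Longrightarrow> g \<in> polyfun C \<Longrightarrow> (\<lambda>x. f x + g x) \<in> polyfun C"
| pf_mult: "f \<in> polyfun C \<Longrightarrow> g \<in> polyfun C \<Longrightarrow> (\<lambda>x. f x * g x) \<in> polyfun C"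

definition coordsX :: "nat \<Rightarrow> (ptX \<Rightarrow> complex) set" where
  "coordsX n = {(\<lambda>x. x j $ a $ b) | j a b. j \<in> {1..n-1}}"

definition coordsC :: "nat \<Rightarrow> ((nat \<Rightarrow> complex) \<Rightarrow> complex) set" where
  "coordsC N = {(\<lambda>y. y k) | k. k < N}"

definition SO2 :: "mat2 set" where
  "SO2 = {g. transpose g ** g = mat 1 \<and> det g = 1}"

definition Nprime :: "nat \<Rightarrow> (nat \<Rightarrow> mat2) set" where
  "Nprime n = {g. \<forall>i\<in>{1..n}. g i \<in> SO2}"

definition actX :: "nat \<Rightarrow> (nat \<Rightarrow> mat2) \<Rightarrow> ptX \<Rightarrow> ptX" where
  "actX n g x = (\<lambda>j. if j \<in> {1..n-1} then g j ** x j ** matrix_inv (g n) else x j)"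

definition delta :: "ptX \<Rightarrow> nat \<Rightarrow> complex" where
  "delta x j = det (x j)"

definition tt :: "ptX \<Rightarrow> nat \<Rightarrow> complex" where
  "tt x j = (1/2) * trace (transpose (x j) ** x j)"

definition SM :: "ptX \<Rightarrow> nat \<Rightarrow> mat2" where
  "SM x j = transpose (x j) ** x j - mat (tt x j)"

(* M_j^t M_j - t_j I = [[a_j, b_j],[b_j, -a_j]] *)
definition aa :: "ptX \<Rightarrow> nat \<Rightarrow> complex" where
  "aa x j = SM x j $ 1 $ 1"

definition bb :: "ptX \<Rightarrow> nat \<Rightarrow> complex" where
  "bb x j = SM x j $ 1 $ 2"

definition wp :: "ptX \<Rightarrow> nat \<Rightarrow> complex" where
  "wp x j = (1/2) * (aa x j - \<i> * bb x j)"

definition wm :: "ptX \<Rightarrow> nat \<Rightarrow> complex" where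
  "wm x j = (1/2) * (aa x j + \<i> * bb x j)"

definition u1 :: "ptX \<Rightarrow> nat \<Rightarrow> complex" where
  "u1 x j = 4 * wp x 1 * wm x j"

definition Dd :: "ptX \<Rightarrow> complex" where
  "Dd x = (delta x 1)^2 - (tt x 1)^2"

definition ut :: "ptX \<Rightarrow> nat \<Rightarrow> complex" where
  "ut x j = u1 x j / Dd x"

definition Phi :: "nat \<Rightarrow> ptX \<Rightarrow> nat \<Rightarrow> complex" where
  "Phi n x k =
     (if k < n - 1 then tt x (k + 1)
      else if k < 2*n - 2 then delta x (k - (n - 1) + 1)
      else if k < 3*n - 4 then ut x (k - (2*n - 2) + 2)
      else 0)"

end

(*
  Write A, B, C, E for the entries of a 2x2 matrix in the isotropic bases e+, e- (e+- = f1 +- i f2)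
  on both sides. A pair of rotations acting by M |-> rot l * M * rot m^-1 multiplies A, B, C, E
  by l m, l/m, m/l, 1/(l m). Hence t_j and delta_j are combinations of B_j C_j and A_j E_j, and
  ut_j = - A_j C_j / (A_1 C_1); all of them are invariant.
  Conversely, where Delta and all ut_j are non-zero, the orbit of x passes through the point
  slice (Phi x) of the slice A_j = 1, C_1 = 1, whose entries are rational in Phi x, and
  Phi o slice = id. So a polynomial vanishing on the image of Phi vanishes on a dense open set,
  and an invariant fraction p/q equals (p/q) o h o slice o Phi for a suitable group element h,
  which is a fraction in Phi whose denominator is a power of the product of the ut_j.
*)
theory Submission
  imports Defs "HOL-Computational_Algebra.Polynomial"
begin

section \<open>Isotropic coordinates on \<open>2 \<times> 2\<close> matrices\<close>

definition mk_mat2 :: "complex \<Rightarrow> complex \<Rightarrow> complex \<Rightarrow> complex \<Rightarrow> mat2" where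
  "mk_mat2 a b c d = (\<chi> i j. if i = 1 then (if j = 1 then a else b) else (if j = 1 then c else d))"

lemma mk_mat2_nth [simp]:
  "mk_mat2 a b c d $ 1 $ 1 = a" "mk_mat2 a b c d $ 1 $ 2 = b"
  "mk_mat2 a b c d $ 2 $ 1 = c" "mk_mat2 a b c d $ 2 $ 2 = d"
  by (simp_all add: mk_mat2_def)

lemma mat2_eq_mk_mat2: "(M::mat2) = mk_mat2 (M$1$1) (M$1$2) (M$2$1) (M$2$2)"
  by (simp add: vec_eq_iff forall_2)

lemma mk_mat2_eq_iff:
  "mk_mat2 a b c d = mk_mat2 a' b' c' d' \<longleftrightarrow> a = a' \<and> b = b' \<and> c = c' \<and> d = d'"
  by (simp add: vec_eq_iff forall_2 mk_mat2_def)

lemma mk_mat2_mult: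
  "mk_mat2 a b c d ** mk_mat2 a' b' c' d' =
     mk_mat2 (a*a' + b*c') (a*b' + b*d') (c*a' + d*c') (c*b' + d*d')"
  by (simp add: vec_eq_iff forall_2 matrix_matrix_mult_def sum_2)

lemma transpose_mk_mat2: "transpose (mk_mat2 a b c d) = mk_mat2 a c b d"
  by (simp add: vec_eq_iff forall_2 transpose_def)

lemma det_mk_mat2: "det (mk_mat2 a b c d) = a*d - b*c"
  by (simp add: det_2)

lemma trace_mk_mat2: "trace (mk_mat2 a b c d) = a + d"
  by (simp add: trace_def sum_2)

lemma mat_eq_mk_mat2: "mat k = mk_mat2 k 0 0 k"
  by (simp add: vec_eq_iff forall_2 mat_def)

lemma mk_mat2_diff: "mk_mat2 a b c d - mk_mat2 a' b' c' d' = mk_mat2 (a-a') (b-b') (c-c') (d-d')"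
  by (simp add: vec_eq_iff forall_2)

text \<open>With \<open>e\<^sub>\<plusminus> = (1, \<plusminus>i)\<close>: \<open>isoA M = e\<^sub>+\<^sup>t M e\<^sub>+\<close>, \<open>isoB M = e\<^sub>+\<^sup>t M e\<^sub>-\<close>,
  \<open>isoC M = e\<^sub>-\<^sup>t M e\<^sub>+\<close>, \<open>isoE M = e\<^sub>-\<^sup>t M e\<^sub>-\<close>.\<close>

definition isoA :: "mat2 \<Rightarrow> complex" where
  "isoA M = M$1$1 + \<i>*M$1$2 + \<i>*M$2$1 - M$2$2"
definition isoB :: "mat2 \<Rightarrow> complex" where
  "isoB M = M$1$1 - \<i>*M$1$2 + \<i>*M$2$1 + M$2$2"
definition isoC :: "mat2 \<Rightarrow> complex" where
  "isoC M = M$1$1 + \<i>*M$1$2 - \<i>*M$2$1 + M$2$2"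
definition isoE :: "mat2 \<Rightarrow> complex" where
  "isoE M = M$1$1 - \<i>*M$1$2 - \<i>*M$2$1 - M$2$2"

definition mat2_of_iso :: "complex \<Rightarrow> complex \<Rightarrow> complex \<Rightarrow> complex \<Rightarrow> mat2" where
  "mat2_of_iso A B C E =
     mk_mat2 ((A+B+C+E)/4) ((A-B+C-E)/(4*\<i>)) ((A+B-C-E)/(4*\<i>)) ((-A+B+C-E)/4)"

lemma iso_mk_mat2:
  "isoA (mk_mat2 a b c d) = a + \<i>*b + \<i>*c - d"
  "isoB (mk_mat2 a b c d) = a - \<i>*b + \<i>*c + d"
  "isoC (mk_mat2 a b c d) = a + \<i>*b - \<i>*c + d"
  "isoE (mk_mat2 a b c d) = a - \<i>*b - \<i>*c - d"
  by (simp_all add: isoA_def isoB_def isoC_def isoE_def)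

lemma iso_mat2_of_iso [simp]:
  "isoA (mat2_of_iso A B C E) = A" "isoB (mat2_of_iso A B C E) = B"
  "isoC (mat2_of_iso A B C E) = C" "isoE (mat2_of_iso A B C E) = E"
  by (simp_all add: mat2_of_iso_def iso_mk_mat2 field_simps)

lemma mat2_of_iso_iso: "mat2_of_iso (isoA M) (isoB M) (isoC M) (isoE M) = M"
  by (subst (5) mat2_eq_mk_mat2)
    (simp add: mat2_of_iso_def mk_mat2_eq_iff isoA_def isoB_def isoC_def isoE_def field_simps)

lemma mat2_eq_iff_iso:
  "(M::mat2) = N \<longleftrightarrow> isoA M = isoA N \<and> isoB M = isoB N \<and> isoC M = isoC N \<and> isoE M = isoE N"
  by (metis mat2_of_iso_iso)

lemma tt_iso: "tt x j = (isoB (x j) * isoC (x j) + isoA (x j) * isoE (x j)) / 4"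
proof -
  obtain a b c d where "x j = mk_mat2 a b c d" using mat2_eq_mk_mat2 by blast
  then show ?thesis
    by (simp add: tt_def transpose_mk_mat2 mk_mat2_mult trace_mk_mat2 iso_mk_mat2
        field_simps power2_eq_square)
qed

lemma delta_iso: "delta x j = (isoB (x j) * isoC (x j) - isoA (x j) * isoE (x j)) / 4"
proof -
  obtain a b c d where "x j = mk_mat2 a b c d" using mat2_eq_mk_mat2 by blast
  then show ?thesis
    by (simp add: delta_def det_mk_mat2 iso_mk_mat2 field_simps power2_eq_square)
qed

lemma wp_iso: "wp x j = isoB (x j) * isoE (x j) / 4"
proof -
  obtain a b c d where "x j = mk_mat2 a b c d" using mat2_eq_mk_mat2 by blast
  then show ?thesis
    by (simp add: wp_def aa_def bb_def SM_def tt_def transpose_mk_mat2 mk_mat2_mult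
        trace_mk_mat2 iso_mk_mat2 mat_eq_mk_mat2 mk_mat2_diff field_simps power2_eq_square)
qed

lemma wm_iso: "wm x j = isoA (x j) * isoC (x j) / 4"
proof -
  obtain a b c d where "x j = mk_mat2 a b c d" using mat2_eq_mk_mat2 by blast
  then show ?thesis
    by (simp add: wm_def aa_def bb_def SM_def tt_def transpose_mk_mat2 mk_mat2_mult
        trace_mk_mat2 iso_mk_mat2 mat_eq_mk_mat2 mk_mat2_diff field_simps power2_eq_square)
qed

lemma Dd_iso: "Dd x = - isoA (x 1) * isoB (x 1) * isoC (x 1) * isoE (x 1) / 4"
  by (simp add: Dd_def tt_iso delta_iso field_simps power2_eq_square)

lemma ut_iso:
  assumes "Dd x \<noteq> 0"
  shows "ut x j = - isoA (x j) * isoC (x j) / (isoA (x 1) * isoC (x 1))"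
proof -
  have "isoB (x 1) \<noteq> 0" "isoE (x 1) \<noteq> 0"
    using assms by (auto simp: Dd_iso)
  then show ?thesis
    by (simp add: ut_def u1_def wp_iso wm_iso Dd_iso field_simps)
qed

section \<open>The action of \<open>SO\<^sub>2 \<times> SO\<^sub>2\<close>\<close>

text \<open>\<open>rot (exp (\<i> \<theta>))\<close> is the rotation by \<open>\<theta>\<close>; \<open>rot\<close> is an isomorphism
  \<open>\<complex>\<^sup>* \<cong> SO\<^sub>2(\<complex>)\<close>.\<close>

definition rot :: "complex \<Rightarrow> mat2" where
  "rot l = mk_mat2 ((l + 1/l)/2) (- (l - 1/l)/(2*\<i>)) ((l - 1/l)/(2*\<i>)) ((l + 1/l)/2)"

lemma rot_mult: "a \<noteq> 0 \<Longrightarrow> b \<noteq> 0 \<Longrightarrow> rot a ** rot b = rot (a * b)"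
  by (simp add: rot_def mk_mat2_mult mk_mat2_eq_iff field_simps power2_eq_square)

lemma transpose_rot: "l \<noteq> 0 \<Longrightarrow> transpose (rot l) = rot (1 / l)"
  by (simp add: rot_def transpose_mk_mat2 mk_mat2_eq_iff field_simps)

lemma rot_in_SO2: "l \<noteq> 0 \<Longrightarrow> rot l \<in> SO2"
  by (simp add: SO2_def transpose_rot rot_mult del: One_nat_def)
    (simp add: rot_def mat_eq_mk_mat2 det_mk_mat2 field_simps power2_eq_square)

lemma SO2_obtain_rot:
  assumes "g \<in> SO2"
  obtains l where "l \<noteq> 0" "g = rot l"
proof -
  obtain a b c d where g: "g = mk_mat2 a b c d" using mat2_eq_mk_mat2 by blast
  have h: "a*a + c*c = 1" "a*b + c*d = 0" "b*b + d*d = 1" "a*d - b*c = 1"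
    using assms by (simp_all add: SO2_def g transpose_mk_mat2 mk_mat2_mult mat_eq_mk_mat2
        det_mk_mat2 mk_mat2_eq_iff)
  have "d = d*(a*d - b*c)" "b = b*(a*d - b*c)" using h by simp_all
  moreover have "d*(a*d - b*c) = a*(b*b + d*d)" "b*(a*d - b*c) = -c*(b*b + d*d)"
    using h(2) by algebra+
  ultimately have d: "d = a" and b: "b = -c" using h by simp_all
  have l: "(a + \<i>*c) * (a - \<i>*c) = 1" using h by (simp add: algebra_simps)
  then have nz: "a + \<i>*c \<noteq> 0" by auto
  with l have "1/(a + \<i>*c) = a - \<i>*c" by (simp add: field_simps)
  then have "g = rot (a + \<i>*c)"
    by (simp add: g rot_def d b mk_mat2_eq_iff field_simps)
  with nz show ?thesis using that by blast
qed

lemma iso_rot_left: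
  assumes "l \<noteq> 0"
  shows "isoA (rot l ** M) = l * isoA M" "isoB (rot l ** M) = l * isoB M"
    "isoC (rot l ** M) = isoC M / l" "isoE (rot l ** M) = isoE M / l"
  using assms by (subst (1 2) mat2_eq_mk_mat2[of M],
      simp add: rot_def mk_mat2_mult iso_mk_mat2 field_simps)+

lemma iso_rot_right:
  assumes "l \<noteq> 0"
  shows "isoA (M ** rot l) = isoA M / l" "isoB (M ** rot l) = l * isoB M"
    "isoC (M ** rot l) = isoC M / l" "isoE (M ** rot l) = l * isoE M"
  using assms by (subst (1 2) mat2_eq_mk_mat2[of M],
      simp add: rot_def mk_mat2_mult iso_mk_mat2 field_simps)+

lemma iso_rot_conj:
  assumes "l \<noteq> 0" "m \<noteq> 0"
  shows "isoA (rot l ** M ** transpose (rot m)) = l * m * isoA M"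
    "isoB (rot l ** M ** transpose (rot m)) = l / m * isoB M"
    "isoC (rot l ** M ** transpose (rot m)) = m / l * isoC M"
    "isoE (rot l ** M ** transpose (rot m)) = isoE M / (l * m)"
  using assms by (simp_all add: transpose_rot iso_rot_left iso_rot_right field_simps)

lemma matrix_inv_eqI:
  fixes A B :: "'a::comm_ring_1^'n^'n"
  assumes "A ** B = mat 1" "B ** A = mat 1"
  shows "matrix_inv A = B"
proof -
  define B' where "B' = matrix_inv A"
  have "A ** B' = mat 1 \<and> B' ** A = mat 1"
    unfolding B'_def matrix_inv_def by (rule someI[of _ B]) (use assms in blast)
  then have "B' = B' ** (A ** B)" and "(B' ** A) ** B = B"
    using assms by simp_all
  then show ?thesis
    unfolding B'_def by (metis matrix_mul_assoc)
qed

lemma SO2_mult_transpose: "g \<in> SO2 \<Longrightarrow> g ** transpose g = mat 1"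
  by (simp add: SO2_def matrix_left_right_inverse)

lemma matrix_inv_SO2: "g \<in> SO2 \<Longrightarrow> matrix_inv g = transpose g"
  by (rule matrix_inv_eqI) (simp_all add: SO2_mult_transpose, simp add: SO2_def)

lemma SO2_mult: "g \<in> SO2 \<Longrightarrow> h \<in> SO2 \<Longrightarrow> h ** g \<in> SO2"
  by (simp add: SO2_def matrix_transpose_mul det_mul matrix_mul_assoc)
    (metis matrix_mul_assoc matrix_mul_lid)

lemma SO2_transpose: "g \<in> SO2 \<Longrightarrow> transpose g \<in> SO2"
  by (simp add: SO2_def SO2_mult_transpose)

lemma Nprime_mult: "g \<in> Nprime n \<Longrightarrow> h \<in> Nprime n \<Longrightarrow> (\<lambda>i. h i ** g i) \<in> Nprime n"
  by (simp add: Nprime_def SO2_mult)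

lemma Nprime_transpose: "g \<in> Nprime n \<Longrightarrow> (\<lambda>i. transpose (g i)) \<in> Nprime n"
  by (simp add: Nprime_def SO2_transpose)

lemma actX_apply:
  assumes "g \<in> Nprime n" "j \<in> {1..n-1}"
  shows "actX n g x j = g j ** x j ** transpose (g n)"
proof -
  have "n \<in> {1..n}" using assms(2) by auto
  with assms(1) have "g n \<in> SO2" by (simp add: Nprime_def)
  with assms(2) show ?thesis by (simp add: actX_def matrix_inv_SO2)
qed

lemma actX_actX:
  assumes "g \<in> Nprime n" "h \<in> Nprime n" "j \<in> {1..n-1}"
  shows "actX n h (actX n g x) j = actX n (\<lambda>i. h i ** g i) x j"
  using assms
  by (simp add: actX_apply Nprime_mult matrix_transpose_mul matrix_mul_assoc)

lemma actX_inverse: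
  assumes "g \<in> Nprime n" "j \<in> {1..n-1}"
  shows "actX n (\<lambda>i. transpose (g i)) (actX n g x) j = x j"
proof -
  have "g j \<in> SO2" "g n \<in> SO2" using assms by (auto simp: Nprime_def)
  then have "transpose (g j) ** g j = mat 1" "transpose (g n) ** g n = mat 1"
    by (simp_all add: SO2_def)
  then have "(transpose (g j) ** g j) ** x j ** (transpose (g n) ** g n) = x j"
    by simp
  then show ?thesis
    using assms by (simp add: actX_apply Nprime_transpose matrix_mul_assoc)
qed

lemma Nprime_obtain_rots:
  assumes "g \<in> Nprime n" "j \<in> {1..n-1}"
  obtains l m where "l \<noteq> 0" "g j = rot l" "m \<noteq> 0" "g n = rot m"
proof -
  have "g j \<in> SO2" "g n \<in> SO2" using assms by (auto simp: Nprime_def)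
  then show ?thesis using SO2_obtain_rot that by metis
qed

lemma tt_delta_actX:
  assumes "g \<in> Nprime n" "j \<in> {1..n-1}"
  shows "tt (actX n g x) j = tt x j" "delta (actX n g x) j = delta x j"
proof -
  obtain l m where l: "l \<noteq> 0" "g j = rot l" and m: "m \<noteq> 0" "g n = rot m"
    using Nprime_obtain_rots[OF assms] .
  show "tt (actX n g x) j = tt x j" "delta (actX n g x) j = delta x j"
    using l m by (simp_all add: tt_iso delta_iso actX_apply[OF assms] iso_rot_conj field_simps)
qed

lemma ut_actX:
  assumes "g \<in> Nprime n" "j \<in> {2..n-1}"
  shows "ut (actX n g x) j = ut x j"
proof -
  have j: "j \<in> {1..n-1}" and one: "1 \<in> {1..n-1}" using assms(2) by auto
  obtain l m where l: "l \<noteq> 0" "g j = rot l" and m: "m \<noteq> 0" "g n = rot m"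
    using Nprime_obtain_rots[OF assms(1) j] .
  obtain l1 where l1: "l1 \<noteq> 0" "g 1 = rot l1"
    using Nprime_obtain_rots[OF assms(1) one] by metis
  have "Dd (actX n g x) = Dd x"
    using tt_delta_actX[OF assms(1) one] by (simp add: Dd_def)
  moreover have "u1 (actX n g x) j = u1 x j"
    unfolding u1_def wp_iso wm_iso actX_apply[OF assms(1) j] actX_apply[OF assms(1) one] l l1 m
    using l l1 m by (simp add: iso_rot_conj field_simps)
  ultimately show ?thesis by (simp add: ut_def)
qed

section \<open>Polynomial functions and their localisations\<close>

lemma polyfun_cmult: "f \<in> polyfun C \<Longrightarrow> (\<lambda>x. c * f x) \<in> polyfun C"
  by (rule pf_mult[OF pf_const])

lemma polyfun_diff: "f \<in> polyfun C \<Longrightarrow> g \<in> polyfun C \<Longrightarrow> (\<lambda>x. f x - g x) \<in> polyfun C"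
  using pf_add[OF _ polyfun_cmult[of g C "-1"]] by simp

lemma polyfun_power: "f \<in> polyfun C \<Longrightarrow> (\<lambda>x. f x ^ k) \<in> polyfun C"
  by (induction k) (auto intro: pf_const pf_mult)

lemma polyfun_prod:
  "finite I \<Longrightarrow> (\<And>i. i \<in> I \<Longrightarrow> f i \<in> polyfun C) \<Longrightarrow> (\<lambda>x. \<Prod>i\<in>I. f i x) \<in> polyfun C"
  by (induction I rule: finite_induct) (auto intro: pf_const pf_mult)

lemma polyfun_coordC: "k < N \<Longrightarrow> (\<lambda>y. y k) \<in> polyfun (coordsC N)"
  by (rule pf_coord) (auto simp: coordsC_def)

lemma polyfun_iso:
  assumes "j \<in> {1..n-1}"
  shows "(\<lambda>x. isoA (x j)) \<in> polyfun (coordsX n)" "(\<lambda>x. isoB (x j)) \<in> polyfun (coordsX n)"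
    "(\<lambda>x. isoC (x j)) \<in> polyfun (coordsX n)" "(\<lambda>x. isoE (x j)) \<in> polyfun (coordsX n)"
proof -
  have coord: "(\<lambda>x. x j $ a $ b) \<in> polyfun (coordsX n)" for a b
    using assms by (intro pf_coord) (auto simp: coordsX_def)
  show "(\<lambda>x. isoA (x j)) \<in> polyfun (coordsX n)" "(\<lambda>x. isoB (x j)) \<in> polyfun (coordsX n)"
    "(\<lambda>x. isoC (x j)) \<in> polyfun (coordsX n)" "(\<lambda>x. isoE (x j)) \<in> polyfun (coordsX n)"
    unfolding isoA_def isoB_def isoC_def isoE_def by (intro pf_add polyfun_diff polyfun_cmult coord)+
qed

lemma polyfun_eq_if_coords_eq: "f \<in> polyfun C \<Longrightarrow> (\<forall>c\<in>C. c x = c x') \<Longrightarrow> f x = f x'"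
  by (induction f rule: polyfun.induct) auto

lemma polyfun_poly_along:
  assumes "\<forall>c\<in>C. \<exists>p. \<forall>s. c (L s) = poly p s" "f \<in> polyfun C"
  shows "\<exists>p. \<forall>s. f (L s) = poly p s"
  using assms(2)
proof (induction f rule: polyfun.induct)
  case (pf_const c)
  show ?case by (rule exI[of _ "[:c:]"]) simp
next
  case (pf_coord f)
  then show ?case using assms(1) by blast
next
  case (pf_add f g)
  then obtain p q where "\<forall>s. f (L s) = poly p s" "\<forall>s. g (L s) = poly q s" by blast
  then show ?case by (intro exI[of _ "p + q"]) simp
next
  case (pf_mult f g)
  then obtain p q where "\<forall>s. f (L s) = poly p s" "\<forall>s. g (L s) = poly q s" by blast
  then show ?case by (intro exI[of _ "p * q"]) simp
qed

lemma poly_common_nonzero: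
  fixes p q :: "complex poly"
  assumes "p \<noteq> 0" "q \<noteq> 0"
  shows "\<exists>s. poly p s \<noteq> 0 \<and> poly q s \<noteq> 0"
proof -
  have "finite ({s. poly p s = 0} \<union> {s. poly q s = 0})"
    using poly_roots_finite assms by blast
  then have "{s. poly p s = 0} \<union> {s. poly q s = 0} \<noteq> UNIV"
    using infinite_UNIV_char_0 by metis
  then show ?thesis by auto
qed

lemma polyfun_common_nonzero:
  assumes line: "\<forall>c\<in>C. \<exists>p. \<forall>s. c (L s) = poly p s" and "L 0 = x0" "L 1 = x1"
    and f: "f \<in> polyfun C" "f x0 \<noteq> 0" and g: "g \<in> polyfun C" "g x1 \<noteq> 0"
  shows "\<exists>x. f x \<noteq> 0 \<and> g x \<noteq> 0"
proof -
  obtain p where p: "\<And>s. f (L s) = poly p s" using polyfun_poly_along[OF line f(1)] by blast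
  obtain q where q: "\<And>s. g (L s) = poly q s" using polyfun_poly_along[OF line g(1)] by blast
  have "p \<noteq> 0" "q \<noteq> 0" using p[of 0] q[of 1] assms by auto
  then obtain s where "poly p s \<noteq> 0" "poly q s \<noteq> 0" using poly_common_nonzero by blast
  then show ?thesis using p q by metis
qed

lemma polyfun_coordsC_eq_0:
  assumes P: "P \<in> polyfun (coordsC N)" and G: "G \<in> polyfun (coordsC N)" "G y0 \<noteq> 0"
    and vanish: "\<And>y. G y \<noteq> 0 \<Longrightarrow> P y = 0"
  shows "P y = 0"
proof (rule ccontr)
  assume "P y \<noteq> 0"
  let ?L = "\<lambda>s k. y k + s * (y0 k - y k)"
  have "\<forall>c\<in>coordsC N. \<exists>p. \<forall>s. c (?L s) = poly p s"
  proof
    fix c assume "c \<in> coordsC N"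
    then obtain k where "c = (\<lambda>y. y k)" unfolding coordsC_def by blast
    then show "\<exists>p. \<forall>s. c (?L s) = poly p s"
      by (intro exI[of _ "[:y k, y0 k - y k:]"]) (simp add: algebra_simps)
  qed
  then have "\<exists>x. P x \<noteq> 0 \<and> G x \<noteq> 0"
    by (rule polyfun_common_nonzero) (use P G \<open>P y \<noteq> 0\<close> in auto)
  then show False using vanish by blast
qed

lemma polyfun_coordsX_common_nonzero:
  assumes "f \<in> polyfun (coordsX n)" "f x0 \<noteq> 0" "g \<in> polyfun (coordsX n)" "g x1 \<noteq> 0"
  shows "\<exists>x. f x \<noteq> 0 \<and> g x \<noteq> 0"
proof -
  let ?L = "\<lambda>s j. \<chi> a b. x0 j $ a $ b + s * (x1 j $ a $ b - x0 j $ a $ b)"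
  have "\<forall>c\<in>coordsX n. \<exists>p. \<forall>s. c (?L s) = poly p s"
  proof
    fix c assume "c \<in> coordsX n"
    then obtain j a b where "c = (\<lambda>x. x j $ a $ b)" unfolding coordsX_def by blast
    then show "\<exists>p. \<forall>s. c (?L s) = poly p s"
      by (intro exI[of _ "[:x0 j $ a $ b, x1 j $ a $ b - x0 j $ a $ b:]"]) (simp add: algebra_simps)
  qed
  then show ?thesis
    by (rule polyfun_common_nonzero) (use assms in \<open>auto simp: vec_eq_iff\<close>)
qed

definition polyfun_loc :: "('p \<Rightarrow> complex) set \<Rightarrow> ('p \<Rightarrow> complex) \<Rightarrow> ('p \<Rightarrow> complex) set" where
  "polyfun_loc C D = {f. \<exists>F\<in>polyfun C. \<exists>m. \<forall>y. D y \<noteq> 0 \<longrightarrow> f y = F y / D y ^ m}"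

lemma polyfun_loc_polyfun: "F \<in> polyfun C \<Longrightarrow> F \<in> polyfun_loc C D"
  unfolding polyfun_loc_def by (intro CollectI bexI[of _ F] exI[of _ 0]) auto

lemma polyfun_loc_const: "(\<lambda>y. c) \<in> polyfun_loc C D"
  by (intro polyfun_loc_polyfun pf_const)

lemma polyfun_loc_mult:
  assumes "f \<in> polyfun_loc C D" "g \<in> polyfun_loc C D"
  shows "(\<lambda>y. f y * g y) \<in> polyfun_loc C D"
proof -
  obtain F m where F: "F \<in> polyfun C" "\<And>y. D y \<noteq> 0 \<Longrightarrow> f y = F y / D y ^ m"
    using assms(1) unfolding polyfun_loc_def by blast
  obtain G l where G: "G \<in> polyfun C" "\<And>y. D y \<noteq> 0 \<Longrightarrow> g y = G y / D y ^ l"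
    using assms(2) unfolding polyfun_loc_def by blast
  show ?thesis
    unfolding polyfun_loc_def
    by (intro CollectI bexI[of _ "\<lambda>y. F y * G y"] exI[of _ "m + l"] allI impI pf_mult F(1) G(1))
      (simp add: F(2) G(2) power_add)
qed

lemma polyfun_loc_cmult: "f \<in> polyfun_loc C D \<Longrightarrow> (\<lambda>y. c * f y) \<in> polyfun_loc C D"
  by (rule polyfun_loc_mult[OF polyfun_loc_const])

lemma polyfun_loc_divide:
  "f \<in> polyfun_loc C D \<Longrightarrow> (\<lambda>y. 1 / g y) \<in> polyfun_loc C D \<Longrightarrow> (\<lambda>y. f y / g y) \<in> polyfun_loc C D"
  using polyfun_loc_mult[of f C D "\<lambda>y. 1 / g y"] by simp

lemma polyfun_loc_uminus: "f \<in> polyfun_loc C D \<Longrightarrow> (\<lambda>y. - f y) \<in> polyfun_loc C D"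
  using polyfun_loc_cmult[of f C D "-1"] by simp

lemma polyfun_loc_inverse:
  assumes "\<And>y. D y = d y * e y" "e \<in> polyfun C"
  shows "(\<lambda>y. 1 / d y) \<in> polyfun_loc C D"
  unfolding polyfun_loc_def using assms
  by (intro CollectI bexI[of _ e] exI[of _ 1] allI impI) auto

context
  fixes C :: "('p \<Rightarrow> complex) set" and D :: "'p \<Rightarrow> complex"
  assumes D: "D \<in> polyfun C"
begin

lemma polyfun_loc_add:
  assumes "f \<in> polyfun_loc C D" "g \<in> polyfun_loc C D"
  shows "(\<lambda>y. f y + g y) \<in> polyfun_loc C D"
proof -
  obtain F m where F: "F \<in> polyfun C" "\<And>y. D y \<noteq> 0 \<Longrightarrow> f y = F y / D y ^ m"
    using assms(1) unfolding polyfun_loc_def by blast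
  obtain G l where G: "G \<in> polyfun C" "\<And>y. D y \<noteq> 0 \<Longrightarrow> g y = G y / D y ^ l"
    using assms(2) unfolding polyfun_loc_def by blast
  show ?thesis
    unfolding polyfun_loc_def
    by (intro CollectI bexI[of _ "\<lambda>y. F y * D y ^ l + G y * D y ^ m"] exI[of _ "m + l"] allI impI
        pf_add pf_mult polyfun_power F(1) G(1) D)
      (simp add: F(2) G(2) field_simps power_add)
qed

lemma polyfun_loc_diff:
  "f \<in> polyfun_loc C D \<Longrightarrow> g \<in> polyfun_loc C D \<Longrightarrow> (\<lambda>y. f y - g y) \<in> polyfun_loc C D"
  using polyfun_loc_add[OF _ polyfun_loc_uminus[of g]] by simp

lemma polyfun_loc_comp:
  assumes "\<forall>c\<in>C'. (\<lambda>y. c (S y)) \<in> polyfun_loc C D" "f \<in> polyfun C'"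
  shows "(\<lambda>y. f (S y)) \<in> polyfun_loc C D"
  using assms(2)
  by (induction f rule: polyfun.induct)
    (auto intro: polyfun_loc_const polyfun_loc_add polyfun_loc_mult assms(1)[rule_format])

lemma polyfun_loc_mat_mult:
  fixes G H :: mat2
  assumes "\<And>a b. (\<lambda>y. S y $ a $ b) \<in> polyfun_loc C D"
  shows "(\<lambda>y. (G ** S y ** H) $ a $ b) \<in> polyfun_loc C D"
proof -
  have "(G ** S y ** H) $ a $ b =
      G$a$1 * (S y$1$1 * H$1$b) + G$a$2 * (S y$2$1 * H$1$b)
      + (G$a$1 * (S y$1$2 * H$2$b) + G$a$2 * (S y$2$2 * H$2$b))" for y
    by (simp add: matrix_matrix_mult_def sum_2 algebra_simps)
  then show ?thesis
    by (simp only:) (intro polyfun_loc_add polyfun_loc_cmult polyfun_loc_mult assms polyfun_loc_const)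
qed

lemma polyfun_loc_mat2_of_iso:
  assumes "A \<in> polyfun_loc C D" "B \<in> polyfun_loc C D" "C' \<in> polyfun_loc C D" "E \<in> polyfun_loc C D"
  shows "(\<lambda>y. mat2_of_iso (A y) (B y) (C' y) (E y) $ a $ b) \<in> polyfun_loc C D"
proof -
  have "a = 1 \<or> a = 2" "b = 1 \<or> b = 2" using exhaust_2 by auto
  then show ?thesis
    by (elim disjE) (simp_all only: mat2_of_iso_def mk_mat2_nth divide_inverse mult.commute[of _ "inverse _"],
        (intro polyfun_loc_cmult polyfun_loc_add polyfun_loc_diff polyfun_loc_uminus assms)+)
qed

end

section \<open>A rational section of \<open>Phi\<close>\<close>

lemma Phi_tt: "j \<in> {1..n-1} \<Longrightarrow> Phi n x (j-1) = tt x j"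
  by (auto simp: Phi_def)

lemma Phi_delta: "j \<in> {1..n-1} \<Longrightarrow> Phi n x (n+j-2) = delta x j"
  by (auto simp: Phi_def)

lemma Phi_ut:
  assumes "j \<in> {2..n-1}"
  shows "Phi n x (2*n+j-4) = ut x j"
proof -
  have j: "2*n+j-4 - (2*n-2) + 2 = j" using assms by auto
  show ?thesis using assms unfolding Phi_def j by auto
qed

lemma Phi_eqI:
  assumes "\<forall>j\<in>{1..n-1}. tt x j = y (j-1) \<and> delta x j = y (n+j-2)"
    and "\<forall>j\<in>{2..n-1}. ut x j = y (2*n+j-4)" and "k < 3*n-4"
  shows "Phi n x k = y k"
proof -
  consider "k < n-1" | "n-1 \<le> k" "k < 2*n-2" | "2*n-2 \<le> k" by linarith
  then show ?thesis
  proof cases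
    case 1
    then show ?thesis using assms(1) by (auto simp: Phi_def dest: bspec[of _ _ "k+1"])
  next
    case 2
    then have "n + (k-(n-1)+1) - 2 = k" by auto
    with 2 show ?thesis using assms(1) by (auto simp: Phi_def dest: bspec[of _ _ "k-(n-1)+1"])
  next
    case 3
    then have "2*n + (k-(2*n-2)+2) - 4 = k" using assms(3) by auto
    with 3 show ?thesis using assms(2,3) by (auto simp: Phi_def dest: bspec[of _ _ "k-(2*n-2)+2"])
  qed
qed

definition ucoord_prod :: "nat \<Rightarrow> (nat \<Rightarrow> complex) \<Rightarrow> complex" where
  "ucoord_prod n y = (\<Prod>k\<in>{2*n-2..<3*n-4}. y k)"

lemma ucoord_prod_Phi:
  assumes "n \<ge> 2"
  shows "ucoord_prod n (Phi n x) = (\<Prod>j\<in>{2..n-1}. ut x j)"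
proof -
  have "(\<Prod>j\<in>{2..n-1}. ut x j) = (\<Prod>k\<in>{2*n-2..<3*n-4}. Phi n x k)"
    by (rule prod.reindex_bij_witness[of _ "\<lambda>k. k+4-2*n" "\<lambda>j. 2*n+j-4"])
      (use assms in \<open>auto simp: Phi_ut\<close>)
  then show ?thesis by (simp add: ucoord_prod_def)
qed

lemma ucoord_prod_polyfun: "ucoord_prod n \<in> polyfun (coordsC (3*n-4))"
  unfolding ucoord_prod_def[abs_def]
  by (intro polyfun_prod polyfun_coordC) auto

text \<open>For \<open>j = 1\<close> the value \<open>-1\<close> is what the formula
  \<open>ut\<^sub>j = - A\<^sub>j C\<^sub>j / (A\<^sub>1 C\<^sub>1)\<close> of \<open>ut_iso\<close> gives.\<close>

definition ut_coord :: "nat \<Rightarrow> (nat \<Rightarrow> complex) \<Rightarrow> nat \<Rightarrow> complex" where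
  "ut_coord n y j = (if j = 1 then -1 else y (2*n+j-4))"

lemma ut_coord_nonzero:
  assumes "ucoord_prod n y \<noteq> 0" "j \<in> {1..n-1}"
  shows "ut_coord n y j \<noteq> 0"
proof (cases "j = 1")
  case False
  then have "2*n+j-4 \<in> {2*n-2..<3*n-4}" using assms(2) by auto
  then show ?thesis using assms(1) False by (auto simp: ut_coord_def ucoord_prod_def)
qed (simp add: ut_coord_def)

text \<open>The point with \<open>A\<^sub>j = 1\<close> and \<open>C\<^sub>1 = 1\<close> on which \<open>Phi\<close> takes the value \<open>y\<close>:
  a rational section of \<open>Phi\<close> meeting every generic orbit.\<close>

definition slice :: "nat \<Rightarrow> (nat \<Rightarrow> complex) \<Rightarrow> ptX" where
  "slice n y j =
     (if j \<in> {1..n-1} then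
        mat2_of_iso 1 (-2 * (y (j-1) + y (n+j-2)) / ut_coord n y j) (- ut_coord n y j)
          (2 * (y (j-1) - y (n+j-2)))
      else 0)"

lemma slice_apply:
  "j \<in> {1..n-1} \<Longrightarrow> slice n y j =
     mat2_of_iso 1 (-2 * (y (j-1) + y (n+j-2)) / ut_coord n y j) (- ut_coord n y j)
       (2 * (y (j-1) - y (n+j-2)))"
  by (simp add: slice_def)

lemma Phi_slice:
  assumes "n \<ge> 2" "y (n-1)^2 \<noteq> y 0^2" "ucoord_prod n y \<noteq> 0"
  shows "Dd (slice n y) \<noteq> 0" "k < 3*n-4 \<Longrightarrow> Phi n (slice n y) k = y k"
proof -
  have tt: "tt (slice n y) j = y (j-1)" and delta: "delta (slice n y) j = y (n+j-2)"
    if "j \<in> {1..n-1}" for j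
    using that ut_coord_nonzero[OF assms(3) that]
    by (simp_all add: slice_apply tt_iso delta_iso field_simps)
  have one: "1 \<in> {1..n-1}" using assms(1) by auto
  show Dd: "Dd (slice n y) \<noteq> 0"
    using tt[OF one] delta[OF one] assms(2) by (simp add: Dd_def)
  have "ut (slice n y) j = y (2*n+j-4)" if "j \<in> {2..n-1}" for j
    using that one by (simp add: ut_iso[OF Dd] slice_apply ut_coord_def)
  then show "k < 3*n-4 \<Longrightarrow> Phi n (slice n y) k = y k"
    using tt delta by (intro Phi_eqI) auto
qed

lemma iso_nonzero_if_generic:
  assumes "Dd x \<noteq> 0" "\<forall>j\<in>{2..n-1}. ut x j \<noteq> 0" "j \<in> {1..n-1}"
  shows "isoA (x j) \<noteq> 0" "isoC (x j) \<noteq> 0"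
proof -
  have "isoA (x 1) \<noteq> 0 \<and> isoC (x 1) \<noteq> 0" using assms(1) by (auto simp: Dd_iso)
  moreover have "isoA (x j) \<noteq> 0 \<and> isoC (x j) \<noteq> 0" if "j \<in> {2..n-1}"
    using assms(2) that by (auto simp: ut_iso[OF assms(1)])
  ultimately show "isoA (x j) \<noteq> 0" "isoC (x j) \<noteq> 0"
    using assms(3) by (cases "j = 1"; auto)+
qed

lemma ut_coord_Phi:
  assumes "Dd x \<noteq> 0" "j \<in> {1..n-1}"
  shows "ut_coord n (Phi n x) j = - isoA (x j) * isoC (x j) / (isoA (x 1) * isoC (x 1))"
proof (cases "j = 1")
  case True
  then show ?thesis using assms(1) by (auto simp: ut_coord_def Dd_iso)
next
  case False
  then have "j \<in> {2..n-1}" using assms(2) by auto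
  with False show ?thesis by (simp add: ut_coord_def Phi_ut ut_iso[OF assms(1)])
qed

lemma rot_normalize:
  assumes "isoA M \<noteq> 0" "isoC M \<noteq> 0" "m \<noteq> 0"
  defines "c \<equiv> m^2 * isoA M * isoC M"
  shows "rot (1 / (m * isoA M)) ** M ** transpose (rot m) =
    mat2_of_iso 1 (isoB M * isoC M / c) c (isoA M * isoE M)"
  using assms by (simp add: mat2_eq_iff_iso iso_rot_conj field_simps power2_eq_square)

lemma slice_normal_form:
  assumes "Dd x \<noteq> 0" "\<forall>j\<in>{2..n-1}. ut x j \<noteq> 0"
  obtains g where "g \<in> Nprime n" "\<forall>j\<in>{1..n-1}. actX n g x j = slice n (Phi n x) j"
proof -
  let ?A = "\<lambda>j. isoA (x j)" and ?C = "\<lambda>j. isoC (x j)"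
  note nonzero = iso_nonzero_if_generic[OF assms]
  have AC1: "?A 1 * ?C 1 \<noteq> 0" using assms(1) by (simp add: Dd_iso)
  define m where "m = csqrt (1 / (?A 1 * ?C 1))"
  have m2: "m^2 = 1 / (?A 1 * ?C 1)" by (simp add: m_def)
  then have "m \<noteq> 0" using AC1 by auto
  define g where "g i = (if i = n then rot m else if i \<in> {1..n-1} then rot (1 / (m * ?A i)) else rot 1)"
    for i
  have g: "g \<in> Nprime n"
    using \<open>m \<noteq> 0\<close> nonzero by (auto simp: Nprime_def g_def intro!: rot_in_SO2)
  have "actX n g x j = slice n (Phi n x) j" if j: "j \<in> {1..n-1}" for j
  proof -
    have "m^2 * ?A j * ?C j = - ut_coord n (Phi n x) j"
      using AC1 by (simp add: m2 ut_coord_Phi[OF assms(1) j] field_simps)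
    moreover have "isoB (x j) * ?C j = 2 * (Phi n x (j-1) + Phi n x (n+j-2))"
      "?A j * isoE (x j) = 2 * (Phi n x (j-1) - Phi n x (n+j-2))"
      unfolding Phi_tt[OF j] Phi_delta[OF j] by (simp_all add: tt_iso delta_iso field_simps)
    moreover have "actX n g x j = rot (1 / (m * ?A j)) ** x j ** transpose (rot m)"
      using j by (auto simp: actX_apply[OF g j] g_def)
    ultimately show ?thesis
      using j nonzero[OF j] \<open>m \<noteq> 0\<close> by (simp add: rot_normalize slice_apply minus_divide_left)
  qed
  with g that show ?thesis by blast
qed

section \<open>Algebraic independence and generation\<close>

lemma Phi_algebraically_independent:
  assumes n: "n \<ge> 2" and P: "P \<in> polyfun (coordsC (3*n-4))"
    and vanish: "\<forall>x. Dd x \<noteq> 0 \<longrightarrow> P (Phi n x) = 0"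
  shows "P y = 0"
proof -
  define G where "G y = (y (n-1)^2 - y 0^2) * ucoord_prod n y" for y :: "nat \<Rightarrow> complex"
  define y0 :: "nat \<Rightarrow> complex" where "y0 k = (if k = n-1 \<or> 2*n-2 \<le> k then 1 else 0)" for k
  have "G \<in> polyfun (coordsC (3*n-4))"
    unfolding G_def[abs_def] using n
    by (intro pf_mult polyfun_diff polyfun_power polyfun_coordC ucoord_prod_polyfun) auto
  moreover have "G y0 \<noteq> 0"
    using n by (simp add: G_def y0_def ucoord_prod_def)
  moreover have "P y = 0" if "G y \<noteq> 0" for y
  proof -
    have "y (n-1)^2 \<noteq> y 0^2" "ucoord_prod n y \<noteq> 0" using that by (auto simp: G_def)
    note slice = Phi_slice[OF n this]
    have "P y = P (Phi n (slice n y))"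
      by (rule polyfun_eq_if_coords_eq[OF P]) (auto simp: coordsC_def slice(2))
    also have "\<dots> = 0" using vanish slice(1) by blast
    finally show ?thesis .
  qed
  ultimately show ?thesis
    using polyfun_coordsC_eq_0[OF P] by blast
qed

lemma obtain_generic_point:
  assumes n: "n \<ge> 2" and q: "q \<in> polyfun (coordsX n)" "q x0 \<noteq> 0"
  obtains x where "q x \<noteq> 0" "Dd x \<noteq> 0" "\<forall>j\<in>{2..n-1}. ut x j \<noteq> 0"
proof -
  have one: "1 \<in> {1..n-1}" using n by auto
  define r where "r x = isoA (x 1) * isoB (x 1) * isoC (x 1) * isoE (x 1) *
    (\<Prod>j\<in>{2..n-1}. isoA (x j) * isoC (x j))" for x
  have "r \<in> polyfun (coordsX n)"
    unfolding r_def[abs_def] by (intro pf_mult polyfun_prod polyfun_iso one) auto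
  moreover have "r (\<lambda>j. mk_mat2 1 0 0 0) \<noteq> 0"
    by (simp add: r_def Dd_iso iso_mk_mat2)
  ultimately obtain x where x: "q x \<noteq> 0" "r x \<noteq> 0"
    using polyfun_coordsX_common_nonzero[OF q] by blast
  then have "Dd x \<noteq> 0" "isoA (x 1) * isoC (x 1) \<noteq> 0"
    by (auto simp: r_def Dd_iso)
  moreover have "\<forall>j\<in>{2..n-1}. ut x j \<noteq> 0"
    using x(2) calculation by (auto simp: r_def ut_iso)
  ultimately show ?thesis using that x(1) by blast
qed

lemma slice_polyfun_loc:
  assumes j: "j \<in> {1..n-1}"
  shows "(\<lambda>y. slice n y j $ a $ b) \<in> polyfun_loc (coordsC (3*n-4)) (ucoord_prod n)"
proof -
  let ?C = "coordsC (3*n-4)" and ?D = "ucoord_prod n"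
  have coord: "(\<lambda>y. y k) \<in> polyfun_loc ?C ?D" if "k < 3*n-4" for k
    using that by (intro polyfun_loc_polyfun polyfun_coordC)
  have u: "(\<lambda>y. ut_coord n y j) \<in> polyfun_loc ?C ?D \<and> (\<lambda>y. 1 / ut_coord n y j) \<in> polyfun_loc ?C ?D"
  proof (cases "j = 1")
    case True
    then show ?thesis by (simp add: ut_coord_def polyfun_loc_const)
  next
    case False
    let ?k = "2*n+j-4" and ?K = "{2*n-2..<3*n-4}"
    have k: "?k \<in> ?K" using j False by auto
    have "ucoord_prod n y = y ?k * (\<Prod>k\<in>?K-{?k}. y k)" for y
      unfolding ucoord_prod_def using prod.remove[OF _ k] by blast
    moreover have "(\<lambda>y. \<Prod>k\<in>?K-{?k}. y k) \<in> polyfun ?C"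
      by (intro polyfun_prod polyfun_coordC) auto
    ultimately have "(\<lambda>y. 1 / y ?k) \<in> polyfun_loc ?C ?D"
      by (rule polyfun_loc_inverse)
    then show ?thesis using False k by (simp add: ut_coord_def coord)
  qed
  moreover have "j - 1 < 3*n-4" "n+j-2 < 3*n-4" using j by auto
  ultimately show ?thesis
    unfolding slice_apply[OF j]
    by (intro polyfun_loc_mat2_of_iso[OF ucoord_prod_polyfun] polyfun_loc_divide[OF _ u[THEN conjunct2]]
        u[THEN conjunct1] polyfun_loc_cmult polyfun_loc_add[OF ucoord_prod_polyfun]
        polyfun_loc_diff[OF ucoord_prod_polyfun] polyfun_loc_uminus polyfun_loc_const coord)
qed

lemma polyfun_comp_translated_slice:
  assumes "f \<in> polyfun (coordsX n)"
  shows "(\<lambda>y. f (actX n h (slice n y))) \<in> polyfun_loc (coordsC (3*n-4)) (ucoord_prod n)"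
proof (rule polyfun_loc_comp[OF ucoord_prod_polyfun _ assms], rule ballI)
  fix c assume "c \<in> coordsX n"
  then obtain j a b where c: "c = (\<lambda>x. x j $ a $ b)" and j: "j \<in> {1..n-1}"
    unfolding coordsX_def by blast
  show "(\<lambda>y. c (actX n h (slice n y))) \<in> polyfun_loc (coordsC (3*n-4)) (ucoord_prod n)"
    unfolding c actX_def using j
    by (simp add: polyfun_loc_mat_mult[OF ucoord_prod_polyfun] slice_polyfun_loc)
qed

lemma translated_slice_in_orbit:
  assumes "Dd x \<noteq> 0" "\<forall>j\<in>{2..n-1}. ut x j \<noteq> 0" "h \<in> Nprime n"
  obtains G where "G \<in> Nprime n"
    "\<And>f. f \<in> polyfun (coordsX n) \<Longrightarrow> f (actX n h (slice n (Phi n x))) = f (actX n G x)"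
proof -
  obtain g where g: "g \<in> Nprime n" "\<forall>j\<in>{1..n-1}. actX n g x j = slice n (Phi n x) j"
    by (rule slice_normal_form[OF assms(1,2)])
  have "actX n h (slice n (Phi n x)) j = actX n (\<lambda>i. h i ** g i) x j" if "j \<in> {1..n-1}" for j
  proof -
    have "actX n h (slice n (Phi n x)) j = actX n h (actX n g x) j"
      using that g(2) by (simp add: actX_def[of n h])
    then show ?thesis using actX_actX[OF g(1) assms(3) that] by simp
  qed
  then have "\<forall>c\<in>coordsX n. c (actX n h (slice n (Phi n x))) = c (actX n (\<lambda>i. h i ** g i) x)"
    by (auto simp: coordsX_def)
  then have "f (actX n h (slice n (Phi n x))) = f (actX n (\<lambda>i. h i ** g i) x)"
    if "f \<in> polyfun (coordsX n)" for f
    using polyfun_eq_if_coords_eq[OF that] by blast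
  then show ?thesis by (rule that[OF Nprime_mult[OF g(1) assms(3)]])
qed

lemma translated_slice_through:
  assumes "Dd x \<noteq> 0" "\<forall>j\<in>{2..n-1}. ut x j \<noteq> 0"
  obtains h where "h \<in> Nprime n"
    "\<And>f. f \<in> polyfun (coordsX n) \<Longrightarrow> f (actX n h (slice n (Phi n x))) = f x"
proof -
  obtain g where g: "g \<in> Nprime n" "\<forall>j\<in>{1..n-1}. actX n g x j = slice n (Phi n x) j"
    by (rule slice_normal_form[OF assms])
  let ?h = "\<lambda>i. transpose (g i)"
  have "actX n ?h (slice n (Phi n x)) j = x j" if "j \<in> {1..n-1}" for j
  proof -
    have "actX n ?h (slice n (Phi n x)) j = actX n ?h (actX n g x) j"
      using that g(2) by (simp add: actX_def[of n ?h])
    then show ?thesis using actX_inverse[OF g(1) that] by simp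
  qed
  then have "\<forall>c\<in>coordsX n. c (actX n ?h (slice n (Phi n x))) = c x"
    by (auto simp: coordsX_def)
  then have "f (actX n ?h (slice n (Phi n x))) = f x" if "f \<in> polyfun (coordsX n)" for f
    using polyfun_eq_if_coords_eq[OF that] by blast
  then show ?thesis by (rule that[OF Nprime_transpose[OF g(1)]])
qed

text \<open>The element \<open>h\<close> is chosen so that \<open>h \<cdot> slice\<close> passes through a point where \<open>q\<close>
  does not vanish; \<open>q \<circ> slice\<close> itself might vanish identically.\<close>

lemma invariant_fraction_factors_through_Phi:
  assumes n: "n \<ge> 2" and p: "p \<in> polyfun (coordsX n)" and q: "q \<in> polyfun (coordsX n)" "q x0 \<noteq> 0"
    and inv: "\<forall>g\<in>Nprime n. \<forall>x. p (actX n g x) * q x = p x * q (actX n g x)"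
  obtains P Q where "P \<in> polyfun (coordsC (3*n-4))" "Q \<in> polyfun (coordsC (3*n-4))"
    "\<exists>x. Dd x \<noteq> 0 \<and> Q (Phi n x) \<noteq> 0"
    "\<And>x. Dd x \<noteq> 0 \<Longrightarrow> Q (Phi n x) \<noteq> 0 \<Longrightarrow> p x * Q (Phi n x) = P (Phi n x) * q x"
proof -
  let ?C = "coordsC (3*n-4)" and ?D = "ucoord_prod n"
  obtain xs where xs: "q xs \<noteq> 0" "Dd xs \<noteq> 0" "\<forall>j\<in>{2..n-1}. ut xs j \<noteq> 0"
    by (rule obtain_generic_point[OF n q])
  obtain h where h: "h \<in> Nprime n"
    and h_xs: "\<And>f. f \<in> polyfun (coordsX n) \<Longrightarrow> f (actX n h (slice n (Phi n xs))) = f xs"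
    using translated_slice_through[OF xs(2,3)] by blast
  define s where "s y = actX n h (slice n y)" for y
  have q_s_xs: "q (s (Phi n xs)) \<noteq> 0"
    using h_xs[OF q(1)] xs(1) by (simp add: s_def)
  obtain Fp mp where Fp: "Fp \<in> polyfun ?C" "\<And>y. ?D y \<noteq> 0 \<Longrightarrow> p (s y) = Fp y / ?D y ^ mp"
    using polyfun_comp_translated_slice[OF p, of h] unfolding polyfun_loc_def s_def by blast
  obtain Fq mq where Fq: "Fq \<in> polyfun ?C" "\<And>y. ?D y \<noteq> 0 \<Longrightarrow> q (s y) = Fq y / ?D y ^ mq"
    using polyfun_comp_translated_slice[OF q(1), of h] unfolding polyfun_loc_def s_def by blast
  define P where "P y = Fp y * ?D y ^ mq * ?D y" for y
  define Q where "Q y = Fq y * ?D y ^ mp * ?D y" for y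
  have "P \<in> polyfun ?C" "Q \<in> polyfun ?C"
    unfolding P_def[abs_def] Q_def[abs_def]
    by (intro pf_mult polyfun_power Fp(1) Fq(1) ucoord_prod_polyfun)+
  moreover have D_Phi: "?D (Phi n x) \<noteq> 0 \<longleftrightarrow> (\<forall>j\<in>{2..n-1}. ut x j \<noteq> 0)" for x
    by (simp add: ucoord_prod_Phi[OF n])
  have "Q (Phi n xs) \<noteq> 0"
    using q_s_xs Fq(2) xs(3) by (simp add: Q_def D_Phi)
  with xs(2) have "\<exists>x. Dd x \<noteq> 0 \<and> Q (Phi n x) \<noteq> 0" by blast
  moreover have "p x * Q (Phi n x) = P (Phi n x) * q x"
    if Dd: "Dd x \<noteq> 0" and Q0: "Q (Phi n x) \<noteq> 0" for x
  proof -
    let ?y = "Phi n x"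
    have D: "?D ?y \<noteq> 0" using Q0 by (auto simp: Q_def)
    obtain G where "G \<in> Nprime n" "\<And>f. f \<in> polyfun (coordsX n) \<Longrightarrow> f (s ?y) = f (actX n G x)"
      using translated_slice_in_orbit[OF Dd D[unfolded D_Phi] h] unfolding s_def by metis
    with inv p q(1) have "p (s ?y) * q x = p x * q (s ?y)" by metis
    then have "Fp ?y / ?D ?y ^ mp * q x = p x * (Fq ?y / ?D ?y ^ mq)"
      by (simp add: Fp(2)[OF D] Fq(2)[OF D])
    then show ?thesis
      using D by (simp add: P_def Q_def field_simps)
  qed
  ultimately show ?thesis using that by blast
qed

theorem proposition8p11:
  fixes n :: nat
  assumes "n \<ge> 2"
  shows
    \<comment> \<open>W'-invariance of the generators\<close>
    "(\<forall>g\<in>Nprime n. \<forall>x. \<forall>j\<in>{1..n-1}.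
        tt (actX n g x) j = tt x j \<and> delta (actX n g x) j = delta x j)
     \<and> (\<forall>g\<in>Nprime n. \<forall>x. Dd x \<noteq> 0 \<longrightarrow> Dd (actX n g x) \<noteq> 0 \<longrightarrow>
        (\<forall>j\<in>{2..n-1}. ut (actX n g x) j = ut x j))
     \<comment> \<open>algebraic independence\<close>
     \<and> (\<forall>P\<in>polyfun (coordsC (3*n-4)).
          (\<forall>x. Dd x \<noteq> 0 \<longrightarrow> P (Phi n x) = 0) \<longrightarrow> (\<forall>y. P y = 0))
     \<comment> \<open>they generate the field of invariant rational functions\<close>
     \<and> (\<forall>p\<in>polyfun (coordsX n). \<forall>q\<in>polyfun (coordsX n).
          (\<exists>x. q x \<noteq> 0) \<longrightarrow>
          (\<forall>g\<in>Nprime n. \<forall>x. p (actX n g x) * q x = p x * q (actX n g x)) \<longrightarrow>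
          (\<exists>P\<in>polyfun (coordsC (3*n-4)). \<exists>Q\<in>polyfun (coordsC (3*n-4)).
             (\<exists>x. Dd x \<noteq> 0 \<and> Q (Phi n x) \<noteq> 0) \<and>
             (\<forall>x. Dd x \<noteq> 0 \<longrightarrow> q x \<noteq> 0 \<longrightarrow> Q (Phi n x) \<noteq> 0 \<longrightarrow>
                  p x * Q (Phi n x) = P (Phi n x) * q x)))"
proof (intro conjI ballI allI impI)
  fix g x j
  assume "g \<in> Nprime n" "j \<in> {1..n-1}"
  then show "tt (actX n g x) j = tt x j" "delta (actX n g x) j = delta x j"
    by (rule tt_delta_actX)+
next
  fix g x j
  assume "g \<in> Nprime n" "j \<in> {2..n-1}"
  then show "ut (actX n g x) j = ut x j" by (rule ut_actX)
next
  fix P y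
  assume "P \<in> polyfun (coordsC (3*n-4))" "\<forall>x. Dd x \<noteq> 0 \<longrightarrow> P (Phi n x) = 0"
  then show "P y = 0" by (rule Phi_algebraically_independent[OF assms])
next
  fix p q
  assume p: "p \<in> polyfun (coordsX n)" and q: "q \<in> polyfun (coordsX n)" "\<exists>x. q x \<noteq> 0"
    and inv: "\<forall>g\<in>Nprime n. \<forall>x. p (actX n g x) * q x = p x * q (actX n g x)"
  from q(2) obtain x0 where x0: "q x0 \<noteq> 0" by blast
  obtain P Q where "P \<in> polyfun (coordsC (3*n-4))" "Q \<in> polyfun (coordsC (3*n-4))"
    "\<exists>x. Dd x \<noteq> 0 \<and> Q (Phi n x) \<noteq> 0"
    "\<And>x. Dd x \<noteq> 0 \<Longrightarrow> Q (Phi n x) \<noteq> 0 \<Longrightarrow> p x * Q (Phi n x) = P (Phi n x) * q x"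
    using invariant_fraction_factors_through_Phi[OF assms p q(1) x0 inv] by blast
  then show "\<exists>P\<in>polyfun (coordsC (3*n-4)). \<exists>Q\<in>polyfun (coordsC (3*n-4)).
      (\<exists>x. Dd x \<noteq> 0 \<and> Q (Phi n x) \<noteq> 0) \<and>
      (\<forall>x. Dd x \<noteq> 0 \<longrightarrow> q x \<noteq> 0 \<longrightarrow> Q (Phi n x) \<noteq> 0 \<longrightarrow> p x * Q (Phi n x) = P (Phi n x) * q x)"
    by blast
qed

end
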